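(* For every integer $n\ge 0$: (i) $c_3(5n+1)$ is odd if and only if $10n+2=j(j+1)$ for some integer $j\ge 1$ with $j\equiv 1$ or $3 \pmod 5$; (ii) $c_3(5n+2)$ is odd if and only if $5n+2=(5j+4)(15j+13)$ for some $j\in\mathbb{Z}$; (iii) $c_3(5n+3)$ is odd if and only if $10n+6=(5j+2)(5j+3)$ for some integer $j\ge 0$; (iv) $c_3(5n+4)$ is odd if and only if $5n+4=j(3j+1)$ for some $j\in\mathbb{Z}$ with $j\equiv 1$ or $2\pmod 5$.
   Context: A partition of $n\ge 0$ is a finite multiset of positive integers summing to $n$. For $n\ge 0$, $c_3(n)$ denotes the number of partitions $\lambda$ of $n$ for which there exists an integer $j\ge 1$ such that: the part $1$ appears in $\lambda$ exactly $j^2$ or exactly $j^2+1$ times; every odd part greater than $1$ appears at most once; the even parts of $\lambda$ are distinct; and every even part of $\lambda$ is either at most $2j$, or is a multiple of $4$ that is at least $4j+4$ (in particular no even integer in $\{2j+2,2j+4,\dots,4j+2\}$ is a part). *)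

theory Defs
  imports Main "HOL-Library.Multiset"
begin

definition partitions :: "nat \<Rightarrow> nat multiset set" where
  "partitions n = {l. (\<forall>x\<in>#l. 0 < x) \<and> sum_mset l = n}"

definition c3_cond :: "nat multiset \<Rightarrow> bool" where
  "c3_cond l \<longleftrightarrow> (\<exists>j::nat. j \<ge> 1 \<and>
      (count l 1 = j^2 \<or> count l 1 = j^2 + 1) \<and>
      (\<forall>k. odd k \<and> k > 1 \<longrightarrow> count l k \<le> 1) \<and>
      (\<forall>k. even k \<longrightarrow> count l k \<le> 1) \<and>
      (\<forall>k\<in>#l. even k \<longrightarrow> k \<le> 2 * j \<or> (4 dvd k \<and> k \<ge> 4 * j + 4)))"

definition c3 :: "nat \<Rightarrow> nat" where
  "c3 n = card {l \<in> partitions n. c3_cond l}"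

end

theory Submission
  imports Defs "HOL-Computational_Algebra.Formal_Power_Series" "HOL-Library.Z2"
begin

text \<open>
  Modulo 2, the partitions with index \<open>j\<close> have generating function
  \<open>(q\<^bsup>j\<^sup>2\<^esup> + q\<^bsup>j\<^sup>2+1\<^esup>) (-q\<^sup>3;q\<^sup>2)\<^sub>\<infinity> (-q\<^sup>2;q\<^sup>2)\<^sub>j (-q\<^bsup>4j+4\<^esup>;q\<^sup>4)\<^sub>\<infinity>\<close>, and since
  \<open>1 + q\<^bsup>4i\<^esup> \<equiv> (1 + q\<^bsup>2i\<^esup>)\<^sup>2\<close> this is \<open>q\<^bsup>j\<^sup>2\<^esup> P (-q\<^bsup>2j+2\<^esup>;q\<^sup>2)\<^sub>\<infinity>\<close> with \<open>P = (-q;q)\<^sub>\<infinity>\<close>.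
  A finite identity gives \<open>\<Sum>\<^sub>j\<^sub>\<ge>\<^sub>0 q\<^bsup>j\<^sup>2\<^esup> (-q\<^bsup>2j+2\<^esup>;q\<^sup>2)\<^sub>\<infinity> \<equiv> P\<close>, so summing over \<open>j \<ge> 1\<close>
  the generating function of \<open>c3\<close> is \<open>P (P + P(q\<^sup>2)) \<equiv> P\<^sup>2 + P\<^sup>3\<close>.
  Since \<open>P \<equiv> (q;q)\<^sub>\<infinity>\<close>, Euler's pentagonal number theorem gives \<open>P\<^sup>2 \<equiv> \<Sum>\<^sub>k\<^sub>\<in>\<^sub>\<int> q\<^bsup>k(3k+1)\<^esup>\<close> and
  Gauss' identity gives \<open>P\<^sup>3 \<equiv> \<Sum>\<^sub>t\<^sub>\<ge>\<^sub>0 q\<^bsup>t(t+1)/2\<^esup>\<close>. Hence \<open>c3(n)\<close> is odd iff exactly one of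
  \<open>n = k(3k+1)\<close>, \<open>2n = t(t+1)\<close> is solvable, and the four cases follow from the residues of
  \<open>k(3k+1)\<close> and \<open>t(t+1)\<close> modulo 5. Infinite products are replaced throughout by finite ones
  that agree with them up to the degree under consideration.
\<close>

unbundle fps_syntax

section \<open>Power series that agree up to a given degree\<close>

definition eq_upto :: "nat \<Rightarrow> 'a::comm_ring_1 fps \<Rightarrow> 'a fps \<Rightarrow> bool" where
  "eq_upto N f g \<longleftrightarrow> (\<forall>i\<le>N. f $ i = g $ i)"

lemma eq_upto_refl [simp]: "eq_upto N f f"
  by (simp add: eq_upto_def)

lemma eq_upto_sym: "eq_upto N f g \<Longrightarrow> eq_upto N g f"
  by (simp add: eq_upto_def)

lemma eq_upto_trans [trans]: "eq_upto N f g \<Longrightarrow> eq_upto N g h \<Longrightarrow> eq_upto N f h"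
  by (simp add: eq_upto_def)

lemma eq_upto_add: "eq_upto N f f' \<Longrightarrow> eq_upto N g g' \<Longrightarrow> eq_upto N (f + g) (f' + g')"
  by (simp add: eq_upto_def)

lemma eq_upto_diff: "eq_upto N f f' \<Longrightarrow> eq_upto N g g' \<Longrightarrow> eq_upto N (f - g) (f' - g')"
  by (simp add: eq_upto_def)

lemma eq_upto_mult: "eq_upto N f f' \<Longrightarrow> eq_upto N g g' \<Longrightarrow> eq_upto N (f * g) (f' * g')"
  unfolding eq_upto_def fps_mult_nth by (auto intro!: sum.cong)

lemma eq_upto_sum: "(\<And>x. x \<in> A \<Longrightarrow> eq_upto N (f x) (g x)) \<Longrightarrow> eq_upto N (sum f A) (sum g A)"
  by (simp add: eq_upto_def fps_sum_nth)

lemma eq_upto_prod: "(\<And>x. x \<in> A \<Longrightarrow> eq_upto N (f x) (g x)) \<Longrightarrow> eq_upto N (prod f A) (prod g A)"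
  by (induction A rule: infinite_finite_induct) (simp_all add: eq_upto_mult)

lemma eq_upto_power: "eq_upto N f g \<Longrightarrow> eq_upto N (f ^ k) (g ^ k)"
  by (induction k) (simp_all add: eq_upto_mult)

lemma eq_upto_X_power_mult: "N < k \<Longrightarrow> eq_upto N (fps_X ^ k * f) 0"
  by (simp add: eq_upto_def fps_X_power_mult_nth)

lemma eq_upto_X_power: "N < k \<Longrightarrow> eq_upto N (fps_X ^ k) 0"
  using eq_upto_X_power_mult[of N k 1] by simp

lemma eq_upto_one_plus_X_power: "N < k \<Longrightarrow> eq_upto N (1 + fps_X ^ k) 1"
  using eq_upto_add[OF eq_upto_refl eq_upto_X_power] by fastforce

lemma eq_upto_one_minus_X_power: "N < k \<Longrightarrow> eq_upto N (1 - fps_X ^ k) 1"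
  using eq_upto_diff[OF eq_upto_refl eq_upto_X_power] by fastforce

lemma eq_upto_mult_cancel_left:
  assumes f0: "f $ 0 = 1" and eq: "eq_upto N (f * g) (f * h)"
  shows "eq_upto N g h"
proof -
  define d where "d = g - h"
  have fd: "(f * d) $ i = 0" if "i \<le> N" for i
    using eq that by (simp add: eq_upto_def d_def algebra_simps)
  have "d $ i = 0" if "i \<le> N" for i
    using that
  proof (induction i rule: less_induct)
    case (less i)
    have "(f * d) $ i = f $ 0 * d $ i + (\<Sum>k=1..i. f $ k * d $ (i - k))"
      by (simp add: fps_mult_nth sum.atLeast_Suc_atMost)
    also have "(\<Sum>k=1..i. f $ k * d $ (i - k)) = 0"
      using less by (intro sum.neutral) auto
    finally show ?case
      using fd[OF less.prems] f0 by simp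
  qed
  then show ?thesis
    by (simp add: eq_upto_def d_def)
qed

lemma eq_upto_prod_cutoff:
  assumes "finite K" and "\<And>k. k \<in> K \<Longrightarrow> N < k \<Longrightarrow> eq_upto N (f k) 1"
  shows "eq_upto N (prod f K) (prod f (K \<inter> {..N}))"
proof -
  have "prod f K = prod f (K \<inter> {..N}) * prod f (K - {..N})"
    using assms(1) by (metis Int_Diff_disjoint Int_Diff_Un finite_Diff finite_Int prod.union_disjoint)
  moreover have "eq_upto N (prod f (K - {..N})) (\<Prod>k\<in>K - {..N}. 1)"
    using assms(2) by (intro eq_upto_prod) auto
  ultimately show ?thesis
    using eq_upto_mult[OF eq_upto_refl] by fastforce
qed

lemma eq_upto_sum_cutoff:
  assumes "finite K" and "\<And>k. k \<in> K \<Longrightarrow> N < k \<Longrightarrow> eq_upto N (f k) 0"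
  shows "eq_upto N (sum f K) (sum f (K \<inter> {..N}))"
proof -
  have "sum f K = sum f (K \<inter> {..N}) + sum f (K - {..N})"
    using assms(1) by (metis Int_Diff_disjoint Int_Diff_Un finite_Diff finite_Int sum.union_disjoint)
  moreover have "eq_upto N (sum f (K - {..N})) (\<Sum>k\<in>K - {..N}. 0)"
    using assms(2) by (intro eq_upto_sum) auto
  ultimately show ?thesis
    using eq_upto_add[OF eq_upto_refl] by fastforce
qed

section \<open>Products \<open>\<Prod>(1 + q\<^sup>k)\<close> and partitions into distinct parts\<close>

definition dp_gf :: "nat set \<Rightarrow> 'a::comm_ring_1 fps" where
  "dp_gf K = (\<Prod>k\<in>K. 1 + fps_X ^ k)"

lemma dp_gf_empty [simp]: "dp_gf {} = 1"
  by (simp add: dp_gf_def)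

lemma dp_gf_nth:
  assumes "finite K"
  shows "(dp_gf K :: 'a::comm_ring_1 fps) $ n = of_nat (card {A \<in> Pow K. \<Sum>A = n})"
proof -
  have "(dp_gf K :: 'a fps) = (\<Sum>A\<in>Pow K. fps_X ^ (\<Sum>A))"
    unfolding dp_gf_def add.commute[of 1] prod_add[OF assms]
    by (intro sum.cong refl) (simp add: power_sum)
  then show ?thesis
    using assms by (simp add: fps_sum_nth sum.If_cases) (simp add: Int_def eq_commute)
qed

lemma dp_gf_union: "finite A \<Longrightarrow> finite B \<Longrightarrow> A \<inter> B = {} \<Longrightarrow> dp_gf (A \<union> B) = dp_gf A * dp_gf B"
  unfolding dp_gf_def by (rule prod.union_disjoint)

lemma dp_gf_image: "inj_on f I \<Longrightarrow> dp_gf (f ` I) = (\<Prod>i\<in>I. 1 + fps_X ^ f i)"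
  unfolding dp_gf_def by (simp add: prod.reindex)

lemma dp_gf_atLeastAtMost_Suc:
  "a \<le> Suc b \<Longrightarrow> dp_gf {a..Suc b} = dp_gf {a..b} * (1 + fps_X ^ Suc b)"
  unfolding dp_gf_def by (simp add: atLeastAtMostSuc_conv)

lemma dp_gf_atLeastAtMost_low:
  "a \<le> b \<Longrightarrow> dp_gf {a..b} = (1 + fps_X ^ a) * dp_gf {Suc a..b}"
  unfolding dp_gf_def by (simp add: Icc_eq_insert_lb_nat)

lemma dp_gf_eq_upto:
  assumes "finite K" and "K \<inter> {..N} = L"
  shows "eq_upto N (dp_gf K) (dp_gf L)"
proof -
  have "eq_upto N (dp_gf K) (dp_gf (K \<inter> {..N}))"
    unfolding dp_gf_def by (rule eq_upto_prod_cutoff[OF assms(1) eq_upto_one_plus_X_power])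
  then show ?thesis
    using assms(2) by simp
qed

section \<open>Identities modulo 2\<close>

fun tri :: "nat \<Rightarrow> nat" where
  "tri 0 = 0"
| "tri (Suc k) = tri k + Suc k"

lemma le_tri: "k \<le> tri k"
  by (induction k) auto

lemma two_tri: "2 * tri k = k * (k + 1)"
  by (induction k) (auto simp: algebra_simps)

lemma two_tri_int: "2 * int (tri k) = int k * (int k + 1)"
  by (induction k) (auto simp: algebra_simps)

lemma bit_fps_add_self [simp]: "(f :: bit fps) + f = 0"
  by (rule fps_ext) (simp only: fps_add_nth fps_zero_nth, simp)

lemma bit_fps_add_self_left [simp]: "(f :: bit fps) + (f + g) = g"
  by (metis add.assoc add_0 bit_fps_add_self)

lemma bit_fps_two [simp]: "(2 :: bit fps) = 0"
  by (metis bit_fps_add_self one_add_one)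

lemma bit_fps_minus_eq_add: "(f :: bit fps) - g = f + g"
  by (simp add: fps_eq_iff)

lemma bit_fps_square_add: "((f :: bit fps) + g)^2 = f^2 + g^2"
proof -
  have "(f + g)^2 = f^2 + g^2 + (f * g + f * g)"
    by (simp add: power2_eq_square algebra_simps)
  then show ?thesis
    by simp
qed

lemma bit_fps_square_sum: "(\<Sum>i\<in>A. f i :: bit fps)^2 = (\<Sum>i\<in>A. (f i)^2)"
  by (induction A rule: infinite_finite_induct) (simp_all add: bit_fps_square_add)

lemma bit_fps_square_X_power: "(fps_X ^ k :: bit fps)^2 = fps_X ^ (2 * k)"
  by (simp add: power_mult[symmetric] mult.commute)

lemma dp_gf_square_bit: "(dp_gf K :: bit fps)^2 = (\<Prod>k\<in>K. 1 + fps_X ^ (2 * k))"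
  unfolding dp_gf_def prod_power_distrib bit_fps_square_add bit_fps_square_X_power by simp

lemma bit_fps_telescope: "(\<Sum>k=1..n. W k + W (Suc k) :: bit fps) = W 1 + W (Suc n)"
  using sum_Suc_diff[of 1 n W] by (simp add: bit_fps_minus_eq_add add.commute)

definition shanks :: "nat \<Rightarrow> bit fps" where
  "shanks n = (\<Sum>k=0..n. fps_X ^ (n * k + tri k) * dp_gf {k+1..n})"

lemma shanks_Suc:
  "shanks (Suc n) = shanks n + fps_X ^ (n * Suc n + tri (Suc n)) + fps_X ^ (Suc n * Suc n + tri (Suc n))"
proof -
  define m where "m = Suc n"
  define V where "V k = fps_X ^ (n * k + tri k) * (dp_gf {k+1..n} :: bit fps)" for k
  define W where "W k = fps_X ^ (n * k + tri k) * (dp_gf {k..n} :: bit fps)" for k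
  define t where "t k = fps_X ^ (m * k + tri k) * (dp_gf {k+1..m} :: bit fps)" for k
  have t_eq: "t k = V k + (W k + W (Suc k))" if "1 \<le> k" "k \<le> n" for k
  proof -
    have "W k = V k + fps_X ^ (m * k + tri k) * dp_gf {k+1..n}"
      unfolding W_def V_def m_def using that
      by (simp add: dp_gf_atLeastAtMost_low[of k n] power_add algebra_simps)
    moreover have "W (Suc k) = fps_X ^ (m * k + tri k) * fps_X ^ m * dp_gf {k+1..n}"
      unfolding W_def m_def by (simp add: power_add[symmetric] algebra_simps)
    moreover have "t k = fps_X ^ (m * k + tri k) * dp_gf {k+1..n} * (1 + fps_X ^ m)"
      unfolding t_def m_def using that by (simp add: dp_gf_atLeastAtMost_Suc)
    ultimately show ?thesis
      by (simp add: algebra_simps)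
  qed
  have t0: "t 0 = V 0 + W 1"
    unfolding t_def V_def W_def m_def by (simp add: dp_gf_atLeastAtMost_Suc algebra_simps)
  have "shanks m = t 0 + (\<Sum>k=1..n. t k) + t m"
    unfolding shanks_def t_def m_def by (simp add: sum.atLeast_Suc_atMost)
  also have "(\<Sum>k=1..n. t k) = (\<Sum>k=1..n. V k + (W k + W (Suc k)))"
    by (rule sum.cong) (simp_all add: t_eq)
  also have "\<dots> = (\<Sum>k=1..n. V k) + (W 1 + W (Suc n))"
    by (simp only: sum.distrib[of V "\<lambda>k. W k + W (Suc k)"] bit_fps_telescope)
  also have "t 0 = V 0 + W 1"
    by (fact t0)
  also have "V 0 + W 1 + ((\<Sum>k=1..n. V k) + (W 1 + W (Suc n))) + t m
      = (V 0 + (\<Sum>k=1..n. V k)) + W (Suc n) + t m"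
    by (simp add: add_ac)
  also have "V 0 + (\<Sum>k=1..n. V k) = shanks n"
    unfolding shanks_def V_def by (simp add: sum.atLeast_Suc_atMost)
  finally show ?thesis
    unfolding W_def t_def m_def by simp
qed

text \<open>Shanks' finite form of Euler's pentagonal number theorem, reduced modulo 2.\<close>

lemma shanks_eq_pentagonal:
  "shanks n = (\<Sum>j=0..n. fps_X ^ (j * j + tri j)) + (\<Sum>j=1..n. fps_X ^ ((j - 1) * j + tri j))"
proof (induction n)
  case 0
  then show ?case
    by (simp add: shanks_def dp_gf_def)
next
  case (Suc n)
  then show ?case
    unfolding shanks_Suc by (simp add: algebra_simps)
qed

lemma dp_gf_eq_upto_shanks:
  assumes "N < n"
  shows "eq_upto N (dp_gf {1..n}) (shanks n)"
proof -
  have "shanks n = dp_gf {1..n} + (\<Sum>k=1..n. fps_X ^ (n * k + tri k) * dp_gf {k+1..n})"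
    unfolding shanks_def by (simp add: sum.atLeast_Suc_atMost)
  also have "eq_upto N \<dots> (dp_gf {1..n} + (\<Sum>k=1..n. 0))"
  proof (intro eq_upto_add eq_upto_refl eq_upto_sum)
    fix k assume "k \<in> {1..n}"
    then have "n \<le> n * k"
      by simp
    then show "eq_upto N (fps_X ^ (n * k + tri k) * dp_gf {k+1..n}) 0"
      using assms by (intro eq_upto_X_power_mult) linarith
  qed
  finally show ?thesis
    by (simp add: eq_upto_sym)
qed

definition evens_gf :: "nat \<Rightarrow> nat \<Rightarrow> bit fps" where
  "evens_gf a b = (\<Prod>m\<in>{a..b}. 1 + fps_X ^ (2 * m))"

lemma evens_gf_empty: "b < a \<Longrightarrow> evens_gf a b = 1"
  by (simp add: evens_gf_def)

lemma evens_gf_Suc: "a \<le> Suc b \<Longrightarrow> evens_gf a (Suc b) = evens_gf a b * (1 + fps_X ^ (2 * Suc b))"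
  unfolding evens_gf_def by (simp add: atLeastAtMostSuc_conv)

lemma evens_gf_low: "a \<le> b \<Longrightarrow> evens_gf a b = (1 + fps_X ^ (2 * a)) * evens_gf (Suc a) b"
  unfolding evens_gf_def by (simp add: Icc_eq_insert_lb_nat)

lemma evens_gf_eq_square: "evens_gf a b = (dp_gf {a..b})^2"
  by (simp add: evens_gf_def dp_gf_square_bit)

definition pair_factor :: "nat \<Rightarrow> nat \<Rightarrow> bit fps" where
  "pair_factor n k = (if k \<le> n then evens_gf (k+1) n * evens_gf (n+1-k) n else 0)"

lemma pair_factor_Suc_0: "pair_factor (Suc n) 0 = (1 + fps_X ^ (2 * Suc n)) * pair_factor n 0"
  unfolding pair_factor_def by (simp add: evens_gf_Suc evens_gf_empty)

lemma pair_factor_Suc: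
  assumes "1 \<le> k" "k \<le> Suc n"
  shows "pair_factor (Suc n) k
    = (1 + fps_X ^ (2 * Suc n)) * (pair_factor n k + fps_X ^ (2 * (Suc n - k)) * pair_factor n (k - 1))"
proof (cases "k = Suc n")
  case True
  then show ?thesis
    unfolding pair_factor_def by (simp add: evens_gf_Suc evens_gf_empty mult.commute)
next
  case False
  then have kn: "k \<le> n"
    using assms by simp
  define E1 where "E1 = evens_gf (k+1) n"
  define E2 where "E2 = evens_gf (n+2-k) n"
  define y where "y = (fps_X ^ (2 * Suc n) :: bit fps)"
  have "pair_factor (Suc n) k = E1 * (1 + y) * (E2 * (1 + y))"
    unfolding pair_factor_def E1_def E2_def y_def using assms kn
    by (simp add: evens_gf_Suc Suc_diff_le)
  moreover have "evens_gf (n+1-k) n = (1 + fps_X ^ (2 * (Suc n - k))) * E2"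
    unfolding E2_def using kn assms evens_gf_low[of "n+1-k" n]
    by (simp add: Suc_diff_le numeral_2_eq_2)
  then have "pair_factor n k = E1 * ((1 + fps_X ^ (2 * (Suc n - k))) * E2)"
    unfolding pair_factor_def using kn by (simp add: E1_def)
  moreover have "evens_gf (k-1+1) n = (1 + fps_X ^ (2 * k)) * E1"
    unfolding E1_def using kn assms evens_gf_low[of k n] by simp
  then have "pair_factor n (k - 1) = (1 + fps_X ^ (2 * k)) * E1 * E2"
    unfolding pair_factor_def using kn assms by (simp add: E2_def Suc_diff_le numeral_2_eq_2)
  moreover have "fps_X ^ (2 * (Suc n - k)) * fps_X ^ (2 * k) = y"
    unfolding y_def power_add[symmetric] using kn by (simp add: algebra_simps)
  ultimately show ?thesis
    unfolding y_def by (simp add: algebra_simps)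
qed

lemma square_sum_Suc:
  "(\<Sum>k=1..Suc n. fps_X ^ (k * k) * pair_factor (Suc n) k)
    = (1 + fps_X ^ (2 * Suc n)) * ((\<Sum>k=1..n. fps_X ^ (k * k) * pair_factor n k)
        + fps_X ^ (2 * n + 1) * (\<Sum>j=0..n. fps_X ^ (j * j) * pair_factor n j))"
proof -
  define y where "y = (fps_X ^ (2 * Suc n) :: bit fps)"
  have "(\<Sum>k=1..Suc n. fps_X ^ (k * k) * pair_factor (Suc n) k)
      = (\<Sum>k=1..Suc n. (1 + y) * (fps_X ^ (k * k) * pair_factor n k)
          + (1 + y) * (fps_X ^ (k * k + 2 * (Suc n - k)) * pair_factor n (k - 1)))"
  proof (rule sum.cong)
    fix k assume "k \<in> {1..Suc n}"
    then have "fps_X ^ (k * k) * pair_factor (Suc n) k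
        = fps_X ^ (k * k) * ((1 + y) * (pair_factor n k + fps_X ^ (2 * (Suc n - k)) * pair_factor n (k - 1)))"
      by (simp add: pair_factor_Suc y_def)
    then show "fps_X ^ (k * k) * pair_factor (Suc n) k
        = (1 + y) * (fps_X ^ (k * k) * pair_factor n k)
          + (1 + y) * (fps_X ^ (k * k + 2 * (Suc n - k)) * pair_factor n (k - 1))"
      by (simp add: power_add algebra_simps)
  qed simp
  also have "\<dots> = (1 + y) * ((\<Sum>k=1..Suc n. fps_X ^ (k * k) * pair_factor n k)
      + (\<Sum>k=1..Suc n. fps_X ^ (k * k + 2 * (Suc n - k)) * pair_factor n (k - 1)))"
    by (simp only: sum.distrib sum_distrib_left distrib_left)
  also have "(\<Sum>k=1..Suc n. fps_X ^ (k * k) * pair_factor n k) = (\<Sum>k=1..n. fps_X ^ (k * k) * pair_factor n k)"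
    by (simp add: pair_factor_def)
  also have "(\<Sum>k=1..Suc n. fps_X ^ (k * k + 2 * (Suc n - k)) * pair_factor n (k - 1))
      = (\<Sum>j=0..n. fps_X ^ (Suc j * Suc j + 2 * (n - j)) * pair_factor n j)"
    by (simp only: One_nat_def sum.shift_bounds_cl_Suc_ivl diff_Suc_Suc minus_nat.diff_0)
  also have "\<dots> = fps_X ^ (2 * n + 1) * (\<Sum>j=0..n. fps_X ^ (j * j) * pair_factor n j)"
    unfolding sum_distrib_left
    by (intro sum.cong refl) (simp add: power_add[symmetric] algebra_simps)
  finally show ?thesis
    unfolding y_def .
qed

text \<open>A finite form of the congruence
  \<open>\<Sum>\<^sub>k q\<^bsup>k\<^sup>2\<^esup> (-q\<^bsup>2k+2\<^esup>;q\<^sup>2)\<^sub>\<infinity> \<equiv> (-q;q)\<^sub>\<infinity>\<close> modulo 2.\<close>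

lemma square_sum_eq_dp_gf: "(\<Sum>k=0..n. fps_X ^ (k * k) * pair_factor n k) = dp_gf {1..2 * n}"
proof (induction n)
  case 0
  then show ?case
    by (simp add: pair_factor_def evens_gf_def dp_gf_def)
next
  case (Suc n)
  have rest: "pair_factor n 0 + (\<Sum>k=1..n. fps_X ^ (k * k) * pair_factor n k) = dp_gf {1..2 * n}"
    using Suc.IH by (simp add: sum.atLeast_Suc_atMost)
  have "(\<Sum>k=0..Suc n. fps_X ^ (k * k) * pair_factor (Suc n) k)
      = pair_factor (Suc n) 0 + (\<Sum>k=1..Suc n. fps_X ^ (k * k) * pair_factor (Suc n) k)"
    by (simp add: sum.atLeast_Suc_atMost)
  also have "\<dots> = (1 + fps_X ^ (2 * Suc n)) * ((pair_factor n 0 + (\<Sum>k=1..n. fps_X ^ (k * k) * pair_factor n k))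
      + fps_X ^ (2 * n + 1) * dp_gf {1..2 * n})"
    unfolding square_sum_Suc pair_factor_Suc_0 Suc.IH by (simp add: algebra_simps)
  also have "\<dots> = (1 + fps_X ^ (2 * Suc n)) * ((1 + fps_X ^ (2 * n + 1)) * dp_gf {1..2 * n})"
    unfolding rest by (simp add: algebra_simps)
  also have "\<dots> = dp_gf {1..2 * n} * (1 + fps_X ^ Suc (2 * n)) * (1 + fps_X ^ Suc (Suc (2 * n)))"
    by (simp add: algebra_simps)
  also have "\<dots> = dp_gf {1..Suc (Suc (2 * n))}"
    by (simp only: dp_gf_atLeastAtMost_Suc le_SucI le_add1 One_nat_def Suc_le_mono)
  finally show ?case
    by simp
qed

section \<open>Gaussian polynomials and Gauss' identity\<close>

definition qpoch :: "nat \<Rightarrow> int fps" where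
  "qpoch m = (\<Prod>i\<in>{1..m}. 1 - fps_X ^ i)"

lemma qpoch_0 [simp]: "qpoch 0 = 1"
  by (simp add: qpoch_def)

lemma qpoch_Suc: "qpoch (Suc m) = qpoch m * (1 - fps_X ^ Suc m)"
  unfolding qpoch_def by (simp add: atLeastAtMostSuc_conv)

lemma qpoch_nth_0: "qpoch m $ 0 = 1"
  by (induction m) (simp_all add: qpoch_Suc)

lemma qpoch_nonzero: "qpoch m \<noteq> 0"
  using qpoch_nth_0[of m] by auto

lemma qpoch_eq_upto:
  assumes "N \<le> m"
  shows "eq_upto N (qpoch m) (qpoch N)"
proof -
  have "{1..m} \<inter> {..N} = {1..N}"
    using assms by auto
  then show ?thesis
    unfolding qpoch_def using eq_upto_prod_cutoff[of "{1..m}" N "\<lambda>i. 1 - fps_X ^ i"]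
    by (metis eq_upto_one_minus_X_power finite_atLeastAtMost)
qed

fun qbinom :: "nat \<Rightarrow> nat \<Rightarrow> int fps" where
  "qbinom 0 k = (if k = 0 then 1 else 0)"
| "qbinom (Suc n) k = (if k = 0 then 1 else qbinom n (k - 1) + fps_X ^ k * qbinom n k)"

lemma qbinom_above: "n < k \<Longrightarrow> qbinom n k = 0"
  by (induction n arbitrary: k) auto

lemma qbinom_0 [simp]: "qbinom n 0 = 1"
  by (cases n) auto

lemma qbinom_self: "qbinom n n = 1"
  by (induction n) (auto simp: qbinom_above)

lemma qbinom_mult_qpoch: "k \<le> n \<Longrightarrow> qbinom n k * qpoch k * qpoch (n - k) = qpoch n"
proof (induction n arbitrary: k)
  case (Suc n k)
  show ?case
  proof (cases "k = 0 \<or> k = Suc n")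
    case True
    then show ?thesis
      using qbinom_self[of "Suc n"] by auto
  next
    case False
    then obtain j where j: "k = Suc j" and kn: "k \<le> n"
      using Suc.prems by (cases k) auto
    have "qbinom n j * qpoch k * qpoch (Suc n - k) = (qbinom n j * qpoch j * qpoch (n - j)) * (1 - fps_X ^ k)"
      using j by (simp add: qpoch_Suc algebra_simps)
    then have A: "qbinom n j * qpoch k * qpoch (Suc n - k) = qpoch n * (1 - fps_X ^ k)"
      using Suc.IH[of j] j kn by simp
    have "fps_X ^ k * qbinom n k * qpoch k * qpoch (Suc n - k)
        = (qbinom n k * qpoch k * qpoch (n - k)) * (fps_X ^ k - fps_X ^ k * fps_X ^ Suc (n - k))"
      using kn by (simp add: Suc_diff_le qpoch_Suc algebra_simps)
    also have "fps_X ^ k * fps_X ^ Suc (n - k) = (fps_X ^ Suc n :: int fps)"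
      using kn by (simp add: power_add[symmetric])
    finally have B: "fps_X ^ k * qbinom n k * qpoch k * qpoch (Suc n - k) = qpoch n * (fps_X ^ k - fps_X ^ Suc n)"
      using Suc.IH[OF kn] by simp
    have "qbinom (Suc n) k * qpoch k * qpoch (Suc n - k)
        = qbinom n j * qpoch k * qpoch (Suc n - k) + fps_X ^ k * qbinom n k * qpoch k * qpoch (Suc n - k)"
      using j by (simp add: algebra_simps)
    also have "\<dots> = qpoch (Suc n)"
      unfolding A B by (simp add: qpoch_Suc algebra_simps)
    finally show ?thesis .
  qed
qed simp

lemma qbinom_Suc':
  assumes "1 \<le> k" "k \<le> Suc n"
  shows "qbinom (Suc n) k = qbinom n k + fps_X ^ (Suc n - k) * qbinom n (k - 1)"
proof (cases "k = Suc n")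
  case True
  then show ?thesis
    by (simp add: qbinom_above)
next
  case False
  then have kn: "k \<le> n"
    using assms by simp
  obtain j where j: "k = Suc j"
    using assms by (cases k) auto
  define c where "c = qpoch k * qpoch (Suc n - k)"
  have L: "qbinom (Suc n) k * c = qpoch (Suc n)"
    unfolding c_def using qbinom_mult_qpoch[of k "Suc n"] assms by (simp add: mult.assoc)
  have R1: "qbinom n k * c = qpoch n * (1 - fps_X ^ (Suc n - k))"
    unfolding c_def using qbinom_mult_qpoch[OF kn] kn by (simp add: Suc_diff_le qpoch_Suc algebra_simps)
  have "fps_X ^ (Suc n - k) * qbinom n j * c
      = (qbinom n j * qpoch j * qpoch (n - j)) * (fps_X ^ (Suc n - k) - fps_X ^ (Suc n - k) * fps_X ^ k)"
    unfolding c_def using j by (simp add: qpoch_Suc algebra_simps)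
  also have "fps_X ^ (Suc n - k) * fps_X ^ k = (fps_X ^ Suc n :: int fps)"
    using kn by (simp add: power_add[symmetric])
  finally have R2: "fps_X ^ (Suc n - k) * qbinom n j * c = qpoch n * (fps_X ^ (Suc n - k) - fps_X ^ Suc n)"
    using qbinom_mult_qpoch[of j n] j kn by simp
  have "(qbinom n k + fps_X ^ (Suc n - k) * qbinom n (k - 1)) * c = qpoch (Suc n)"
    using R1 R2 j by (simp add: algebra_simps qpoch_Suc)
  moreover have "c \<noteq> 0"
    unfolding c_def using qpoch_nonzero by simp
  ultimately show ?thesis
    using L by (metis mult_right_cancel)
qed

text \<open>\<open>jac_exp a m = (m - a)(m - a - 1)/2\<close>, written without integer arithmetic.\<close>

definition jac_exp :: "nat \<Rightarrow> nat \<Rightarrow> nat" where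
  "jac_exp a m = (if m \<le> a then tri (a - m) else tri (m - a - 1))"

lemma jac_exp_step: "j \<le> a + b \<Longrightarrow> (a + b - j) + jac_exp a (Suc j) = b + jac_exp a j"
proof -
  assume jab: "j \<le> a + b"
  consider "j < a" | "j = a" | "a < j"
    by linarith
  then show ?thesis
  proof cases
    case 1
    then have "a - j = Suc (a - Suc j)"
      by simp
    then have "tri (a - j) = tri (a - Suc j) + (a - j)"
      by simp
    then show ?thesis
      using 1 jab by (simp add: jac_exp_def)
  next
    case 3
    then have "Suc j - a - 1 = Suc (j - a - 1)"
      by simp
    then have "tri (Suc j - a - 1) = tri (j - a - 1) + (j - a)"
      using 3 by simp
    then show ?thesis
      using 3 jab by (simp add: jac_exp_def)
  qed (simp add: jac_exp_def)
qed

text \<open>A finite form of Jacobi's triple product identity: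
  \<open>(-q;q)\<^sub>a (-1;q)\<^sub>b = \<Sum>\<^sub>m [a+b choose m]\<^sub>q q\<^bsup>(m-a)(m-a-1)/2\<^esup>\<close>.\<close>

lemma jacobi_finite_0: "(dp_gf {1..a} :: int fps) = (\<Sum>m=0..a. qbinom a m * fps_X ^ jac_exp a m)"
proof (induction a)
  case 0
  then show ?case
    by (simp add: jac_exp_def)
next
  case (Suc a)
  define S where "S = (\<Sum>m=0..a. qbinom a m * fps_X ^ jac_exp a m)"
  have shift: "(\<Sum>m=0..Suc a. f m) = f 0 + (\<Sum>j=0..a. f (Suc j))" for f :: "nat \<Rightarrow> int fps"
    by (simp only: sum.atLeast0_atMost_Suc_shift comp_def)
  have step: "qbinom (Suc a) (Suc j) * fps_X ^ jac_exp (Suc a) (Suc j)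
      = qbinom a j * fps_X ^ jac_exp a j + fps_X ^ Suc a * (qbinom a (Suc j) * fps_X ^ jac_exp a (Suc j))"
    if "j \<le> a" for j
  proof (cases "j = a")
    case False
    then have ja: "j < a"
      using that by simp
    have "a - j = Suc (a - Suc j)"
      using ja by simp
    then have "tri (a - j) = tri (a - Suc j) + (a - j)"
      by simp
    then have "fps_X ^ Suc j * fps_X ^ tri (a - j) = (fps_X ^ Suc a * fps_X ^ jac_exp a (Suc j) :: int fps)"
      using ja by (simp add: jac_exp_def power_add[symmetric])
    then show ?thesis
      using ja by (simp add: jac_exp_def algebra_simps)
  qed (simp add: qbinom_above jac_exp_def)
  have "(\<Sum>m=0..Suc a. qbinom (Suc a) m * fps_X ^ jac_exp (Suc a) m)
      = fps_X ^ tri (Suc a) + S + fps_X ^ Suc a * (\<Sum>j=0..a. qbinom a (Suc j) * fps_X ^ jac_exp a (Suc j))"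
    unfolding shift S_def using step by (simp add: jac_exp_def sum.distrib sum_distrib_left add.assoc)
  also have "fps_X ^ tri (Suc a) = fps_X ^ Suc a * fps_X ^ jac_exp a 0"
    unfolding power_add[symmetric] by (simp add: jac_exp_def add.commute)
  also have "(\<Sum>j=0..a. qbinom a (Suc j) * fps_X ^ jac_exp a (Suc j)) = S - fps_X ^ jac_exp a 0"
    unfolding S_def using shift[of "\<lambda>m. qbinom a m * fps_X ^ jac_exp a m"] by (simp add: qbinom_above)
  finally have "(\<Sum>m=0..Suc a. qbinom (Suc a) m * fps_X ^ jac_exp (Suc a) m) = S * (1 + fps_X ^ Suc a)"
    by (simp add: algebra_simps)
  then show ?case
    using Suc.IH by (simp add: S_def dp_gf_atLeastAtMost_Suc)
qed

lemma jacobi_finite: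
  "(dp_gf {1..a} :: int fps) * (\<Prod>i\<in>{0..<b}. 1 + fps_X ^ i)
    = (\<Sum>m=0..a+b. qbinom (a + b) m * fps_X ^ jac_exp a m)"
proof (induction b)
  case 0
  then show ?case
    using jacobi_finite_0 by simp
next
  case (Suc b)
  define M where "M = a + b"
  define S where "S = (\<Sum>m=0..M. qbinom M m * fps_X ^ jac_exp a m)"
  have shift: "(\<Sum>m=0..Suc M. f m) = f 0 + (\<Sum>j=0..M. f (Suc j))" for f :: "nat \<Rightarrow> int fps"
    by (simp only: sum.atLeast0_atMost_Suc_shift comp_def)
  have step: "qbinom (Suc M) (Suc j) * fps_X ^ jac_exp a (Suc j)
      = qbinom M (Suc j) * fps_X ^ jac_exp a (Suc j) + fps_X ^ b * (qbinom M j * fps_X ^ jac_exp a j)"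
    if "j \<le> M" for j
  proof -
    have "fps_X ^ (M - j) * fps_X ^ jac_exp a (Suc j) = (fps_X ^ b * fps_X ^ jac_exp a j :: int fps)"
      using jac_exp_step[of j a b] that unfolding M_def by (simp only: power_add[symmetric])
    then show ?thesis
      using qbinom_Suc'[of "Suc j" M] that by (simp add: algebra_simps)
  qed
  have "(\<Sum>m=0..Suc M. qbinom (Suc M) m * fps_X ^ jac_exp a m)
      = (\<Sum>m=0..Suc M. qbinom M m * fps_X ^ jac_exp a m) + fps_X ^ b * S"
    unfolding shift S_def using step by (simp add: sum.distrib sum_distrib_left add.assoc)
  also have "(\<Sum>m=0..Suc M. qbinom M m * fps_X ^ jac_exp a m) = S"
    by (simp add: S_def qbinom_above)
  finally show ?case
    using Suc.IH by (simp add: S_def M_def algebra_simps)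
qed

lemma qbinom_mult_qpoch_eq_upto:
  assumes "N < m" "N < M - m" "m \<le> M"
  shows "eq_upto N (qbinom M m * qpoch N) 1"
proof (rule eq_upto_mult_cancel_left[OF qpoch_nth_0[of N]])
  have "qpoch N * (qbinom M m * qpoch N) = qbinom M m * qpoch N * qpoch N"
    by (simp add: mult_ac)
  also have "eq_upto N \<dots> (qbinom M m * qpoch m * qpoch (M - m))"
    using assms by (intro eq_upto_mult[OF eq_upto_mult[OF eq_upto_refl]] eq_upto_sym[OF qpoch_eq_upto]) simp_all
  also have "qbinom M m * qpoch m * qpoch (M - m) = qpoch M"
    using qbinom_mult_qpoch assms by simp
  also have "eq_upto N \<dots> (qpoch N * 1)"
    using assms by (simp add: qpoch_eq_upto)
  finally show "eq_upto N (qpoch N * (qbinom M m * qpoch N)) (qpoch N * 1)" .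
qed

lemma eq_upto_mult_2_cancel:
  fixes f g :: "int fps"
  assumes "eq_upto N (2 * f) (2 * g)"
  shows "eq_upto N f g"
  using assms by (simp add: eq_upto_def numeral_fps_const fps_mult_left_const_nth)

lemma tri_sum_eq_upto:
  assumes "N \<le> K"
  shows "eq_upto N (\<Sum>t=0..K. fps_X ^ tri t :: 'a::comm_ring_1 fps) (\<Sum>t=0..N. fps_X ^ tri t)"
proof -
  have "eq_upto N (\<Sum>t=0..K. fps_X ^ tri t :: 'a fps) (\<Sum>t\<in>{0..K} \<inter> {..N}. fps_X ^ tri t)"
  proof (rule eq_upto_sum_cutoff)
    fix k assume "N < k"
    then have "N < tri k"
      using le_tri[of k] by linarith
    then show "eq_upto N (fps_X ^ tri k :: 'a fps) 0"
      by (rule eq_upto_X_power)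
  qed simp
  moreover have "{0..K} \<inter> {..N} = {0..N}"
    using assms by auto
  ultimately show ?thesis
    by simp
qed

lemma jacobi_sum_mult_qpoch_eq_upto:
  assumes "2 * N + 1 < n"
  shows "eq_upto N ((\<Sum>m=0..n+n. qbinom (n + n) m * fps_X ^ jac_exp n m) * qpoch N)
           (\<Sum>m=0..n+n. fps_X ^ jac_exp n m)"
  unfolding sum_distrib_right
proof (rule eq_upto_sum)
  fix m assume m: "m \<in> {0..n+n}"
  have eq: "qbinom (n + n) m * fps_X ^ jac_exp n m * qpoch N = fps_X ^ jac_exp n m * (qbinom (n + n) m * qpoch N)"
    by (simp add: mult_ac)
  show "eq_upto N (qbinom (n + n) m * fps_X ^ jac_exp n m * qpoch N) (fps_X ^ jac_exp n m)"
  proof (cases "N < jac_exp n m")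
    case True
    then have "eq_upto N (fps_X ^ jac_exp n m * (qbinom (n + n) m * qpoch N)) 0"
      and "eq_upto N 0 (fps_X ^ jac_exp n m)"
      by (simp_all add: eq_upto_X_power_mult eq_upto_sym[OF eq_upto_X_power])
    then show ?thesis
      unfolding eq by (rule eq_upto_trans)
  next
    case False
    \<comment> \<open>a term of degree at most \<open>N\<close> forces both \<open>m\<close> and \<open>2n - m\<close> to exceed \<open>N\<close>\<close>
    then have "N < m" "N < n + n - m"
      using m assms le_tri[of "n - m"] le_tri[of "m - n - 1"] by (auto simp: jac_exp_def split: if_splits)
    then have "eq_upto N (fps_X ^ jac_exp n m * (qbinom (n + n) m * qpoch N)) (fps_X ^ jac_exp n m * 1)"
      using m by (intro eq_upto_mult[OF eq_upto_refl] qbinom_mult_qpoch_eq_upto) simp_all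
    then show ?thesis
      unfolding eq by simp
  qed
qed

lemma jac_exp_sum:
  assumes "0 < n"
  shows "(\<Sum>m=0..n+n. fps_X ^ jac_exp n m :: 'a::comm_ring_1 fps)
    = (\<Sum>t=0..n. fps_X ^ tri t) + (\<Sum>t=0..n-1. fps_X ^ tri t)"
proof -
  have "(\<Sum>m=0..n+n. fps_X ^ jac_exp n m :: 'a fps) = (\<Sum>m=0..n. fps_X ^ jac_exp n m) + (\<Sum>m=n+1..n+n. fps_X ^ jac_exp n m)"
    by (rule sum.ub_add_nat) simp
  also have "(\<Sum>m=0..n. fps_X ^ jac_exp n m :: 'a fps) = (\<Sum>m=0..n. fps_X ^ tri (n - m))"
    by (rule sum.cong) (auto simp: jac_exp_def)
  also have "\<dots> = (\<Sum>t=0..n. fps_X ^ tri t)"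
    by (subst sum.atLeastAtMost_rev) simp
  also have "(\<Sum>m=n+1..n+n. fps_X ^ jac_exp n m :: 'a fps) = (\<Sum>m=0+(n+1)..(n-1)+(n+1). fps_X ^ jac_exp n m)"
    using assms by simp
  also have "\<dots> = (\<Sum>t=0..n-1. fps_X ^ tri t)"
    unfolding sum.shift_bounds_cl_nat_ivl by (rule sum.cong) (auto simp: jac_exp_def)
  finally show ?thesis .
qed

text \<open>Gauss' identity \<open>(-q;q)\<^sub>\<infinity>\<^sup>2 (q;q)\<^sub>\<infinity> = \<Sum>\<^sub>t q\<^bsup>t(t+1)/2\<^esup>\<close>, truncated at degree \<open>N\<close>.
  It comes from the case \<open>a = b\<close> of \<open>jacobi_finite\<close>, whose factor \<open>1 + q\<^sup>0 = 2\<close> is cancelled at the end.\<close>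

lemma gauss_identity_eq_upto:
  "eq_upto N (dp_gf {1..N} * dp_gf {1..N} * qpoch N :: int fps) (\<Sum>t=0..N. fps_X ^ tri t)"
proof -
  define n where "n = 2 * N + 2"
  then have n_pos: "0 < n"
    by simp
  have "{0..<n} = insert 0 {1..<n}"
    unfolding n_def by auto
  then have "(\<Prod>i\<in>{0..<n}. 1 + fps_X ^ i :: int fps) = 2 * dp_gf {1..<n}"
    unfolding dp_gf_def by simp
  then have prod_eq: "(dp_gf {1..n} :: int fps) * (\<Prod>i\<in>{0..<n}. 1 + fps_X ^ i) * qpoch N
      = 2 * (dp_gf {1..n} * dp_gf {1..<n} * qpoch N)"
    by (simp add: mult_ac)
  have "eq_upto N (2 * (dp_gf {1..N} * dp_gf {1..N} * qpoch N)) (2 * (dp_gf {1..n} * dp_gf {1..<n} * qpoch N))"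
    by (intro eq_upto_mult eq_upto_refl eq_upto_sym[OF dp_gf_eq_upto]) (auto simp: n_def)
  also have "2 * (dp_gf {1..n} * dp_gf {1..<n} * qpoch N)
      = (dp_gf {1..n} :: int fps) * (\<Prod>i\<in>{0..<n}. 1 + fps_X ^ i) * qpoch N"
    by (rule prod_eq[symmetric])
  also have "eq_upto N \<dots> ((\<Sum>t=0..n. fps_X ^ tri t) + (\<Sum>t=0..n-1. fps_X ^ tri t))"
    unfolding jacobi_finite jac_exp_sum[OF n_pos, symmetric]
    by (rule jacobi_sum_mult_qpoch_eq_upto) (simp add: n_def)
  also have "eq_upto N \<dots> (2 * (\<Sum>t=0..N. fps_X ^ tri t))"
    unfolding mult_2 by (intro eq_upto_add tri_sum_eq_upto) (simp_all add: n_def)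
  finally have "eq_upto N (2 * (dp_gf {1..N} * dp_gf {1..N} * qpoch N)) (2 * (\<Sum>t=0..N. fps_X ^ tri t))" .
  then show ?thesis
    by (rule eq_upto_mult_2_cancel)
qed

definition fps_map_int :: "int fps \<Rightarrow> 'a::comm_ring_1 fps" where
  "fps_map_int f = Abs_fps (\<lambda>n. of_int (f $ n))"

lemma fps_map_int_nth [simp]: "fps_map_int f $ n = of_int (f $ n)"
  by (simp add: fps_map_int_def)

lemma fps_map_int_add: "fps_map_int (f + g) = fps_map_int f + fps_map_int g"
  and fps_map_int_diff: "fps_map_int (f - g) = fps_map_int f - fps_map_int g"
  and fps_map_int_mult: "fps_map_int (f * g) = fps_map_int f * fps_map_int g"
  and fps_map_int_1: "fps_map_int 1 = 1"
  and fps_map_int_X_power: "fps_map_int (fps_X ^ k) = fps_X ^ k"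
  by (simp_all add: fps_eq_iff fps_mult_nth)

lemma fps_map_int_prod: "fps_map_int (prod f A) = (\<Prod>a\<in>A. fps_map_int (f a))"
  by (induction A rule: infinite_finite_induct) (simp_all add: fps_map_int_1 fps_map_int_mult)

lemma fps_map_int_sum: "fps_map_int (sum f A) = (\<Sum>a\<in>A. fps_map_int (f a))"
  by (induction A rule: infinite_finite_induct) (simp_all add: fps_map_int_add fps_eq_iff)

lemma fps_map_int_eq_upto: "eq_upto N f g \<Longrightarrow> eq_upto N (fps_map_int f) (fps_map_int g)"
  by (simp add: eq_upto_def)

lemma fps_map_int_dp_gf: "fps_map_int (dp_gf K) = dp_gf K"
  unfolding dp_gf_def fps_map_int_prod by (simp add: fps_map_int_add fps_map_int_1 fps_map_int_X_power)

lemma fps_map_int_qpoch_bit: "fps_map_int (qpoch m) = (dp_gf {1..m} :: bit fps)"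
  unfolding qpoch_def dp_gf_def fps_map_int_prod
  by (simp add: fps_map_int_diff fps_map_int_1 fps_map_int_X_power bit_fps_minus_eq_add)

lemma gauss_identity_bit_eq_upto:
  "eq_upto N ((dp_gf {1..N})^3 :: bit fps) (\<Sum>t=0..N. fps_X ^ tri t)"
  using fps_map_int_eq_upto[OF gauss_identity_eq_upto[of N], where 'a = bit]
  by (simp only: fps_map_int_mult fps_map_int_dp_gf fps_map_int_qpoch_bit fps_map_int_sum
      fps_map_int_X_power power3_eq_cube)

section \<open>The partitions counted by \<open>c3\<close>\<close>

text \<open>A partition counted by \<open>c3\<close> with index \<open>j\<close> consists of \<open>q \<in> {j\<^sup>2, j\<^sup>2 + 1}\<close> ones together with a
  set of distinct parts from \<open>allowed_parts j\<close>; the bound \<open>{..n}\<close> merely keeps \<open>part_sets\<close> finite.\<close>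

definition allowed_parts :: "nat \<Rightarrow> nat set" where
  "allowed_parts j = {k. odd k \<and> 3 \<le> k} \<union> {k. even k \<and> 2 \<le> k \<and> k \<le> 2 * j} \<union> {k. 4 dvd k \<and> 4 * j + 4 \<le> k}"

definition part_sets :: "nat \<Rightarrow> nat \<Rightarrow> nat \<Rightarrow> nat set set" where
  "part_sets n j q = {A \<in> Pow (allowed_parts j \<inter> {..n}). \<Sum>A + q = n}"

definition ones_plus :: "nat \<Rightarrow> nat set \<Rightarrow> nat multiset" where
  "ones_plus q A = replicate_mset q 1 + mset_set A"

lemma allowed_parts_ge_2: "k \<in> allowed_parts j \<Longrightarrow> 2 \<le> k"
  unfolding allowed_parts_def by auto

lemma finite_part_sets: "finite (part_sets n j q)"
  by (rule finite_subset[of _ "Pow {..n}"]) (auto simp: part_sets_def)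

lemma part_sets_finite_not_1:
  assumes "A \<in> part_sets n j q"
  shows "finite A \<and> 1 \<notin> A"
proof -
  have "A \<subseteq> allowed_parts j \<inter> {..n}"
    using assms by (simp add: part_sets_def)
  then show ?thesis
    using allowed_parts_ge_2[of 1 j] finite_subset[of A "{..n}"] by auto
qed

lemma count_ones_plus:
  "finite A \<Longrightarrow> count (ones_plus q A) k = (if k = 1 then q else 0) + (if k \<in> A then 1 else 0)"
  by (simp add: ones_plus_def count_mset_set')

lemma sum_mset_ones_plus: "finite A \<Longrightarrow> sum_mset (ones_plus q A) = q + \<Sum>A"
  using sum_unfold_sum_mset[of "\<lambda>x. x" A] by (simp add: ones_plus_def)

lemma inj_on_ones_plus: "inj_on (ones_plus q) (part_sets n j q)"
proof (rule inj_onI)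
  fix A B assume "A \<in> part_sets n j q" "B \<in> part_sets n j q" and eq: "ones_plus q A = ones_plus q B"
  then have "finite A" "finite B"
    using part_sets_finite_not_1 by blast+
  moreover have "mset_set A = mset_set B"
    using eq by (simp add: ones_plus_def)
  ultimately show "A = B"
    by simp
qed

lemma multiset_eq_ones_plus:
  assumes "\<And>k. k \<noteq> 1 \<Longrightarrow> count l k \<le> 1"
  shows "l = ones_plus (count l 1) (set_mset l - {1})"
proof (rule multiset_eqI)
  fix k
  show "count l k = count (ones_plus (count l 1) (set_mset l - {1})) k"
  proof (cases "k = 1")
    case False
    have "count l k = (if k \<in># l then 1 else 0)"
      using assms[OF False] by (cases "count l k") (auto simp: not_in_iff)
    then show ?thesis
      using False by (simp add: count_ones_plus)
  qed (simp add: count_ones_plus)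
qed

lemma square_index_unique:
  fixes i j q :: nat
  assumes "1 \<le> i" "1 \<le> j" "q \<in> {i^2, i^2 + 1}" "q \<in> {j^2, j^2 + 1}"
  shows "i = j"
proof -
  have "b \<le> a" if "1 \<le> a" "q \<in> {a^2, a^2 + 1}" "q \<in> {b^2, b^2 + 1}" for a b :: nat
  proof (rule ccontr)
    assume "\<not> b \<le> a"
    then have "(a + 1)^2 \<le> b^2"
      by (intro power_mono) auto
    then show False
      using that by (auto simp: power2_eq_square)
  qed
  then show ?thesis
    using assms by (meson le_antisym)
qed

lemma parts_mem_allowed_parts:
  assumes "l \<in> partitions n"
    and evens: "\<forall>k\<in>#l. even k \<longrightarrow> k \<le> 2 * j \<or> (4 dvd k \<and> k \<ge> 4 * j + 4)"
  shows "set_mset l - {1} \<subseteq> allowed_parts j \<inter> {..n}"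
proof
  fix k assume "k \<in> set_mset l - {1}"
  then have k: "k \<in># l" "k \<noteq> 1" "0 < k"
    using assms(1) by (auto simp: partitions_def)
  have "k \<le> n"
    using sum_mset.remove[OF k(1)] assms(1) by (simp add: partitions_def)
  moreover have "k \<in> allowed_parts j"
  proof (cases "even k")
    case True
    then have "2 \<le> k"
      using k(3) by presburger
    then show ?thesis
      using evens k(1) True unfolding allowed_parts_def by auto
  next
    case False
    then have "3 \<le> k"
      using k(2,3) by presburger
    then show ?thesis
      using False unfolding allowed_parts_def by auto
  qed
  ultimately show "k \<in> allowed_parts j \<inter> {..n}"
    by simp
qed

lemma c3_cond_decomp:
  assumes "l \<in> partitions n" and "c3_cond l"
  obtains j where "j \<in> {1..n}" "count l 1 \<in> {j^2, j^2 + 1}"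
    and "set_mset l - {1} \<in> part_sets n j (count l 1)"
    and "l = ones_plus (count l 1) (set_mset l - {1})"
proof -
  from assms(2) obtain j where j: "j \<ge> 1" "count l 1 \<in> {j^2, j^2 + 1}"
    and odd_le: "\<forall>k. odd k \<and> k > 1 \<longrightarrow> count l k \<le> 1"
    and even_le: "\<forall>k. even k \<longrightarrow> count l k \<le> 1"
    and evens: "\<forall>k\<in>#l. even k \<longrightarrow> k \<le> 2 * j \<or> (4 dvd k \<and> k \<ge> 4 * j + 4)"
    unfolding c3_cond_def by auto
  have "count l k \<le> 1" if "k \<noteq> 1" for k
  proof (cases "even k")
    case False
    then have "1 < k"
      using that by presburger
    then show ?thesis
      using odd_le False by blast
  qed (use even_le in blast)
  then have l: "l = ones_plus (count l 1) (set_mset l - {1})"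
    by (rule multiset_eq_ones_plus)
  have sum: "count l 1 + \<Sum>(set_mset l - {1}) = n"
    using assms(1) sum_mset_ones_plus[of "set_mset l - {1}" "count l 1"] l by (simp add: partitions_def)
  then have "j \<le> n"
    using j by (auto simp: power2_eq_square intro: order.trans[of j "j * j"])
  then show ?thesis
    using that[of j] j sum l parts_mem_allowed_parts[OF assms(1) evens] by (auto simp: part_sets_def)
qed

lemma ones_plus_mem_partitions:
  assumes "A \<in> part_sets n j q"
  shows "ones_plus q A \<in> partitions n"
proof -
  have A: "finite A" "A \<subseteq> allowed_parts j" "\<Sum>A + q = n"
    using assms part_sets_finite_not_1 unfolding part_sets_def by blast+
  have "0 < k" if "k \<in># ones_plus q A" for k
  proof (cases "k = 1")
    case False
    then have "k \<in> A"
      using that A(1) by (simp add: ones_plus_def split: if_splits)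
    then show ?thesis
      using A(2) allowed_parts_ge_2[of k j] by auto
  qed simp
  then show ?thesis
    using A(1,3) unfolding partitions_def by (simp add: sum_mset_ones_plus)
qed

lemma c3_cond_ones_plus:
  assumes "1 \<le> j" "q \<in> {j^2, j^2 + 1}" "A \<in> part_sets n j q"
  shows "c3_cond (ones_plus q A)"
  unfolding c3_cond_def
proof (intro exI[of _ j] conjI allI impI ballI)
  have A: "finite A" "1 \<notin> A" "A \<subseteq> allowed_parts j"
    using assms(3) part_sets_finite_not_1 unfolding part_sets_def by blast+
  show "count (ones_plus q A) 1 = j^2 \<or> count (ones_plus q A) 1 = j^2 + 1"
    using assms(2) A by (auto simp: count_ones_plus)
  show "count (ones_plus q A) k \<le> 1" if "odd k \<and> 1 < k" for k
    using that A(1) by (simp add: count_ones_plus)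
  show "count (ones_plus q A) k \<le> 1" if "even k" for k
  proof -
    have "k \<noteq> 1"
      using that by auto
    then show ?thesis
      using A(1) by (simp add: count_ones_plus)
  qed
  show "k \<le> 2 * j \<or> (4 dvd k \<and> k \<ge> 4 * j + 4)" if "k \<in># ones_plus q A" "even k" for k
  proof -
    have "k \<noteq> 1"
      using \<open>even k\<close> by auto
    then have "k \<in> A"
      using that(1) A(1) by (simp add: ones_plus_def split: if_splits)
    then have "k \<in> allowed_parts j"
      using A(3) by blast
    then show ?thesis
      using \<open>even k\<close> unfolding allowed_parts_def by auto
  qed
qed (fact assms(1))

lemma c3_partitions_eq_UN:
  "{l \<in> partitions n. c3_cond l}
    = (\<Union>(j, q)\<in>Sigma {1..n} (\<lambda>j. {j^2, j^2 + 1}). ones_plus q ` part_sets n j q)"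
proof (intro set_eqI iffI)
  fix l assume "l \<in> {l \<in> partitions n. c3_cond l}"
  then obtain j where "j \<in> {1..n}" "count l 1 \<in> {j^2, j^2 + 1}"
    "set_mset l - {1} \<in> part_sets n j (count l 1)" "l = ones_plus (count l 1) (set_mset l - {1})"
    using c3_cond_decomp by blast
  then show "l \<in> (\<Union>(j, q)\<in>Sigma {1..n} (\<lambda>j. {j^2, j^2 + 1}). ones_plus q ` part_sets n j q)"
    by (intro UN_I[of "(j, count l 1)"]) auto
next
  fix l assume "l \<in> (\<Union>(j, q)\<in>Sigma {1..n} (\<lambda>j. {j^2, j^2 + 1}). ones_plus q ` part_sets n j q)"
  then obtain j q A where "j \<in> {1..n}" "q \<in> {j^2, j^2 + 1}" "A \<in> part_sets n j q" "l = ones_plus q A"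
    by blast
  then show "l \<in> {l \<in> partitions n. c3_cond l}"
    using ones_plus_mem_partitions c3_cond_ones_plus[of j q A n] by auto
qed

lemma c3_eq_sum_card:
  "c3 n = (\<Sum>(j, q)\<in>Sigma {1..n} (\<lambda>j. {j^2, j^2 + 1}). card (part_sets n j q))"
proof -
  define I where "I = Sigma {1..n} (\<lambda>j. {j^2, j^2 + 1})"
  define F where "F = (\<lambda>(j, q). ones_plus q ` part_sets n j q)"
  have count_1: "count l 1 = q" if "l \<in> F (j, q)" for l j q
    using that part_sets_finite_not_1 by (auto simp: F_def count_ones_plus)
  have "card (\<Union>(F ` I)) = (\<Sum>i\<in>I. card (F i))"
  proof (rule card_UN_disjoint)
    show "\<forall>i\<in>I. \<forall>i'\<in>I. i \<noteq> i' \<longrightarrow> F i \<inter> F i' = {}"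
    proof (intro ballI impI equals0I)
      fix i i' l assume "i \<in> I" "i' \<in> I" "i \<noteq> i'" "l \<in> F i \<inter> F i'"
      moreover obtain j q j' q' where i: "i = (j, q)" and i': "i' = (j', q')"
        by (cases i, cases i')
      ultimately have "1 \<le> j" "q \<in> {j^2, j^2 + 1}" "1 \<le> j'" "q' \<in> {j'^2, j'^2 + 1}"
        and "q = q'"
        using count_1[of l j q] count_1[of l j' q'] by (simp_all add: I_def)
      then show False
        using square_index_unique[of j j' q] \<open>i \<noteq> i'\<close> i i' by simp
    qed
  qed (auto simp: I_def F_def finite_part_sets)
  moreover have "card (F i) = (case i of (j, q) \<Rightarrow> card (part_sets n j q))" for i
    unfolding F_def by (cases i) (simp add: card_image[OF inj_on_ones_plus])
  ultimately show ?thesis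
    unfolding c3_def c3_partitions_eq_UN I_def F_def by simp
qed

lemma card_part_sets:
  "of_nat (card (part_sets n j q)) = (fps_X ^ q * dp_gf (allowed_parts j \<inter> {..n}) :: 'a::comm_ring_1 fps) $ n"
proof (cases "q \<le> n")
  case True
  then have "part_sets n j q = {A \<in> Pow (allowed_parts j \<inter> {..n}). \<Sum>A = n - q}"
    unfolding part_sets_def by auto
  then show ?thesis
    using True by (simp add: fps_X_power_mult_nth dp_gf_nth)
next
  case False
  then have "part_sets n j q = {}"
    unfolding part_sets_def by auto
  then show ?thesis
    using False by (simp add: fps_X_power_mult_nth)
qed

lemma c3_bit_coeff:
  "(of_nat (c3 n) :: bit) = (\<Sum>j=1..n. (fps_X ^ j^2 + fps_X ^ (j^2 + 1)) * dp_gf (allowed_parts j \<inter> {..n})) $ n"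
proof -
  have "c3 n = (\<Sum>j=1..n. card (part_sets n j (j^2)) + card (part_sets n j (j^2 + 1)))"
    unfolding c3_eq_sum_card by (subst sum.Sigma[symmetric]) auto
  then show ?thesis
    by (simp add: card_part_sets fps_sum_nth algebra_simps)
qed

section \<open>The generating function of \<open>c3\<close> modulo 2\<close>

definition odd_upto :: "nat \<Rightarrow> nat set" where
  "odd_upto B = {k. odd k \<and> k \<le> B}"

lemma finite_odd_upto [simp]: "finite (odd_upto B)"
  by (simp add: odd_upto_def)

lemma dp_gf_odd_upto:
  assumes "1 \<le> B"
  shows "dp_gf (odd_upto B) = (1 + fps_X) * dp_gf (odd_upto B - {1})"
proof -
  have ins: "odd_upto B = insert 1 (odd_upto B - {1})"
    using assms by (auto simp: odd_upto_def)
  have "dp_gf (insert 1 (odd_upto B - {1})) = (1 + fps_X) * dp_gf (odd_upto B - {1})"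
    unfolding dp_gf_def by (subst prod.insert) simp_all
  then show ?thesis
    by (subst ins)
qed

lemma allowed_parts_atMost:
  assumes "j \<le> M"
  shows "allowed_parts j \<inter> {..4 * M}
    = (odd_upto (4 * M) - {1}) \<union> ((\<lambda>i. 2 * i) ` {1..j} \<union> (\<lambda>i. 4 * i) ` {j+1..M})"
proof (intro set_eqI iffI)
  fix k assume k: "k \<in> allowed_parts j \<inter> {..4 * M}"
  consider "odd k \<and> 3 \<le> k" | "even k \<and> 2 \<le> k \<and> k \<le> 2 * j" | "4 dvd k \<and> 4 * j + 4 \<le> k"
    using k unfolding allowed_parts_def by blast
  then show "k \<in> (odd_upto (4 * M) - {1}) \<union> ((\<lambda>i. 2 * i) ` {1..j} \<union> (\<lambda>i. 4 * i) ` {j+1..M})"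
  proof cases
    case 2
    then have "k = 2 * (k div 2)" "k div 2 \<in> {1..j}"
      by auto
    then show ?thesis
      by blast
  next
    case 3
    then have "k = 4 * (k div 4)" "k div 4 \<in> {j+1..M}"
      using k by auto
    then show ?thesis
      by blast
  qed (use k in \<open>auto simp: odd_upto_def\<close>)
next
  fix k assume "k \<in> (odd_upto (4 * M) - {1}) \<union> ((\<lambda>i. 2 * i) ` {1..j} \<union> (\<lambda>i. 4 * i) ` {j+1..M})"
  then consider "odd k" "k \<noteq> 1" "k \<le> 4 * M" | i where "i \<in> {1..j}" "k = 2 * i"
    | i where "i \<in> {j+1..M}" "k = 4 * i"
    unfolding odd_upto_def by blast
  then show "k \<in> allowed_parts j \<inter> {..4 * M}"
  proof cases
    case 1
    then have "3 \<le> k"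
      by presburger
    with 1 show ?thesis
      unfolding allowed_parts_def by simp
  qed (use assms in \<open>auto simp: allowed_parts_def\<close>)
qed

lemma evens_gf_image: "evens_gf a b = dp_gf ((\<lambda>i. 2 * i) ` {a..b})"
  unfolding evens_gf_def by (subst dp_gf_image) (auto simp: inj_on_def)

lemma evens_gf_square: "(evens_gf a b)^2 = dp_gf ((\<lambda>i. 4 * i) ` {a..b})"
proof -
  have "(1 + fps_X ^ (2 * i) :: bit fps)^2 = 1 + fps_X ^ (4 * i)" for i
    by (simp add: bit_fps_square_add bit_fps_square_X_power)
  then show ?thesis
    unfolding evens_gf_def prod_power_distrib by (subst dp_gf_image) (auto simp: inj_on_def)
qed

lemma evens_gf_split:
  assumes "j \<le> M"
  shows "evens_gf 1 M = evens_gf 1 j * evens_gf (j+1) M"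
proof -
  have "{1..M} = {1..j} \<union> {j+1..M}"
    using assms by auto
  then show ?thesis
    unfolding evens_gf_def by (simp only:) (rule prod.union_disjoint; auto)
qed

lemma evens_gf_eq_upto_1: "N < 2 * a \<Longrightarrow> eq_upto N (evens_gf a b) 1"
  unfolding evens_gf_def using eq_upto_prod[of "{a..b}" N "\<lambda>m. 1 + fps_X ^ (2 * m)" "\<lambda>_. 1"]
  by (simp add: eq_upto_one_plus_X_power)

lemma allowed_parts_dp_gf:
  assumes "1 \<le> j" "j \<le> M"
  shows "(fps_X ^ j^2 + fps_X ^ (j^2 + 1)) * dp_gf (allowed_parts j \<inter> {..4 * M})
    = fps_X ^ j^2 * (dp_gf (odd_upto (4 * M)) * evens_gf 1 M) * evens_gf (j+1) M"
proof -
  have "(odd_upto (4 * M) - {1}) \<inter> ((\<lambda>i. 2 * i) ` {1..j} \<union> (\<lambda>i. 4 * i) ` {j+1..M}) = {}"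
    and "(\<lambda>i. 2 * i) ` {1..j} \<inter> (\<lambda>i. 4 * i) ` {j+1..M} = {}"
    unfolding odd_upto_def by auto
  then have "dp_gf (allowed_parts j \<inter> {..4 * M}) = dp_gf (odd_upto (4 * M) - {1})
      * (dp_gf ((\<lambda>i. 2 * i) ` {1..j}) * dp_gf ((\<lambda>i. 4 * i) ` {j+1..M}))"
    unfolding allowed_parts_atMost[OF assms(2)] by (simp add: dp_gf_union)
  also have "dp_gf ((\<lambda>i. 2 * i) ` {1..j}) = evens_gf 1 j"
    by (simp add: evens_gf_image)
  also have "dp_gf ((\<lambda>i. 4 * i) ` {j+1..M}) = (evens_gf (j+1) M)^2"
    by (simp add: evens_gf_square)
  finally have "dp_gf (allowed_parts j \<inter> {..4 * M})
      = dp_gf (odd_upto (4 * M) - {1}) * (evens_gf 1 j * (evens_gf (j+1) M)^2)" .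
  moreover have "dp_gf (odd_upto (4 * M)) = (1 + fps_X) * (dp_gf (odd_upto (4 * M) - {1}) :: bit fps)"
    using assms by (intro dp_gf_odd_upto) simp
  moreover have "fps_X ^ j^2 + fps_X ^ (j^2 + 1) = fps_X ^ j^2 * (1 + fps_X :: bit fps)"
    by (simp add: algebra_simps)
  ultimately show ?thesis
    using evens_gf_split[OF assms(2)] by (simp add: power2_eq_square mult_ac)
qed

lemma square_sum_eq_upto:
  assumes "2 * m \<le> M"
  shows "eq_upto m (\<Sum>k=0..m. fps_X ^ k^2 * evens_gf (k+1) M) (dp_gf {1..2 * M})"
proof -
  have "eq_upto m (\<Sum>k=0..m. fps_X ^ k^2 * evens_gf (k+1) M) (\<Sum>k=0..m. fps_X ^ (k * k) * pair_factor M k)"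
  proof (rule eq_upto_sum)
    fix k assume k: "k \<in> {0..m}"
    then have "eq_upto m (evens_gf (M+1-k) M) 1"
      using assms by (intro evens_gf_eq_upto_1) auto
    then have "eq_upto m (evens_gf (k+1) M * evens_gf (M+1-k) M) (evens_gf (k+1) M * 1)"
      by (rule eq_upto_mult[OF eq_upto_refl])
    moreover have "pair_factor M k = evens_gf (k+1) M * evens_gf (M+1-k) M"
      using k assms by (simp add: pair_factor_def)
    ultimately have "eq_upto m (evens_gf (k+1) M * 1) (pair_factor M k)"
      by (simp add: eq_upto_sym)
    then show "eq_upto m (fps_X ^ k^2 * evens_gf (k+1) M) (fps_X ^ (k * k) * pair_factor M k)"
      by (simp add: power2_eq_square eq_upto_mult)
  qed
  also have "eq_upto m \<dots> (\<Sum>k\<in>{0..M}. fps_X ^ (k * k) * pair_factor M k)"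
  proof -
    have "{0..M} \<inter> {..m} = {0..m}"
      using assms by auto
    moreover have "eq_upto m (\<Sum>k\<in>{0..M}. fps_X ^ (k * k) * pair_factor M k)
        (\<Sum>k\<in>{0..M} \<inter> {..m}. fps_X ^ (k * k) * pair_factor M k)"
      by (rule eq_upto_sum_cutoff) (auto intro: eq_upto_X_power_mult order.strict_trans2[OF _ le_square])
    ultimately show ?thesis
      by (simp add: eq_upto_sym)
  qed
  also have "(\<Sum>k\<in>{0..M}. fps_X ^ (k * k) * pair_factor M k) = dp_gf {1..2 * M}"
    by (rule square_sum_eq_dp_gf)
  finally show ?thesis .
qed

lemma allowed_parts_sum_eq_upto:
  assumes "2 * m \<le> M"
  shows "eq_upto m (\<Sum>j=1..m. (fps_X ^ j^2 + fps_X ^ (j^2 + 1)) * dp_gf (allowed_parts j \<inter> {..m}))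
    (dp_gf (odd_upto (4 * M)) * evens_gf 1 M * (\<Sum>j=1..m. fps_X ^ j^2 * evens_gf (j+1) M))"
proof -
  have "eq_upto m (\<Sum>j=1..m. (fps_X ^ j^2 + fps_X ^ (j^2 + 1)) * dp_gf (allowed_parts j \<inter> {..m}))
      (\<Sum>j=1..m. fps_X ^ j^2 * (dp_gf (odd_upto (4 * M)) * evens_gf 1 M) * evens_gf (j+1) M)"
  proof (rule eq_upto_sum)
    fix j assume j: "j \<in> {1..m}"
    have "eq_upto m (dp_gf (allowed_parts j \<inter> {..m}) :: bit fps) (dp_gf (allowed_parts j \<inter> {..4 * M}))"
      using assms by (intro eq_upto_sym[OF dp_gf_eq_upto]) auto
    then have "eq_upto m ((fps_X ^ j^2 + fps_X ^ (j^2 + 1)) * dp_gf (allowed_parts j \<inter> {..m}))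
        ((fps_X ^ j^2 + fps_X ^ (j^2 + 1)) * dp_gf (allowed_parts j \<inter> {..4 * M}) :: bit fps)"
      by (rule eq_upto_mult[OF eq_upto_refl])
    also have "(fps_X ^ j^2 + fps_X ^ (j^2 + 1)) * dp_gf (allowed_parts j \<inter> {..4 * M})
        = fps_X ^ j^2 * (dp_gf (odd_upto (4 * M)) * evens_gf 1 M) * evens_gf (j+1) M"
      using j assms by (intro allowed_parts_dp_gf) auto
    finally show "eq_upto m ((fps_X ^ j^2 + fps_X ^ (j^2 + 1)) * dp_gf (allowed_parts j \<inter> {..m}))
        (fps_X ^ j^2 * (dp_gf (odd_upto (4 * M)) * evens_gf 1 M) * evens_gf (j+1) M)" .
  qed
  then show ?thesis
    by (simp add: sum_distrib_left mult_ac)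
qed

lemma odd_evens_eq_upto:
  assumes "2 * m \<le> M"
  shows "eq_upto m (dp_gf (odd_upto (4 * M)) * evens_gf 1 M) (dp_gf {1..m})"
proof -
  have "dp_gf (odd_upto (4 * M)) * evens_gf 1 M = dp_gf (odd_upto (4 * M) \<union> (\<lambda>i. 2 * i) ` {1..M})"
    unfolding evens_gf_image by (rule dp_gf_union[symmetric]) (auto simp: odd_upto_def)
  moreover have "(odd_upto (4 * M) \<union> (\<lambda>i. 2 * i) ` {1..M}) \<inter> {..m} = {1..m}"
  proof (intro set_eqI iffI)
    fix k assume k: "k \<in> {1..m}"
    show "k \<in> (odd_upto (4 * M) \<union> (\<lambda>i. 2 * i) ` {1..M}) \<inter> {..m}"
    proof (cases "odd k")
      case False
      then have "k = 2 * (k div 2)" "k div 2 \<in> {1..M}"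
        using k assms by auto
      then show ?thesis
        using k by (metis IntI UnI2 atLeastAtMost_iff atMost_iff image_eqI)
    qed (use k assms in \<open>auto simp: odd_upto_def\<close>)
  next
    fix k assume "k \<in> (odd_upto (4 * M) \<union> (\<lambda>i. 2 * i) ` {1..M}) \<inter> {..m}"
    then show "k \<in> {1..m}"
      unfolding odd_upto_def using odd_pos by fastforce
  qed
  ultimately show ?thesis
    by (simp add: dp_gf_eq_upto)
qed

lemma c3_gf_eq_upto:
  "eq_upto m (\<Sum>j=1..m. (fps_X ^ j^2 + fps_X ^ (j^2 + 1)) * dp_gf (allowed_parts j \<inter> {..m}))
     ((dp_gf {1..m})^2 + (dp_gf {1..m})^3 :: bit fps)"
proof -
  define M where "M = 2 * m"
  define P where "P = (dp_gf {1..m} :: bit fps)"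
  have "(\<Sum>j=1..m. fps_X ^ j^2 * evens_gf (j+1) M)
      = (\<Sum>k=0..m. fps_X ^ k^2 * evens_gf (k+1) M) + evens_gf 1 M"
    by (simp add: sum.atLeast_Suc_atMost add.commute)
  also have "eq_upto m \<dots> (P + P^2)"
  proof (intro eq_upto_add)
    have "eq_upto m (\<Sum>k=0..m. fps_X ^ k^2 * evens_gf (k+1) M) (dp_gf {1..2 * M})"
      by (rule square_sum_eq_upto) (simp add: M_def)
    also have "eq_upto m (dp_gf {1..2 * M}) P"
      unfolding P_def by (rule dp_gf_eq_upto) (auto simp: M_def)
    finally show "eq_upto m (\<Sum>k=0..m. fps_X ^ k^2 * evens_gf (k+1) M) P" .
    show "eq_upto m (evens_gf 1 M) (P^2)"
      unfolding evens_gf_eq_square P_def M_def by (intro eq_upto_power dp_gf_eq_upto) auto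
  qed
  finally have S: "eq_upto m (\<Sum>j=1..m. fps_X ^ j^2 * evens_gf (j+1) M) (P + P^2)" .
  have "eq_upto m (\<Sum>j=1..m. (fps_X ^ j^2 + fps_X ^ (j^2 + 1)) * dp_gf (allowed_parts j \<inter> {..m}))
      (dp_gf (odd_upto (4 * M)) * evens_gf 1 M * (\<Sum>j=1..m. fps_X ^ j^2 * evens_gf (j+1) M))"
    by (rule allowed_parts_sum_eq_upto) (simp add: M_def)
  also have "eq_upto m \<dots> (P * (P + P^2))"
    using odd_evens_eq_upto[of m M] S by (intro eq_upto_mult) (simp_all add: M_def P_def)
  also have "P * (P + P^2) = P^2 + P^3"
    by (simp add: algebra_simps power2_eq_square power3_eq_cube)
  finally show ?thesis
    unfolding P_def .
qed

section \<open>Parity of \<open>c3\<close>\<close>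

lemma coeff_sum_X_power:
  assumes "inj_on f J" "finite J"
  shows "(\<Sum>j\<in>J. fps_X ^ f j :: 'a::comm_ring_1 fps) $ m = of_bool (\<exists>j\<in>J. f j = m)"
proof (cases "\<exists>j\<in>J. f j = m")
  case True
  then obtain j0 where j0: "j0 \<in> J" "f j0 = m"
    by blast
  have "(\<Sum>j\<in>J. fps_X ^ f j :: 'a fps) $ m = (\<Sum>j\<in>J. if j = j0 then 1 else 0)"
    unfolding fps_sum_nth using assms(1) j0 by (intro sum.cong) (auto simp: inj_on_def)
  then show ?thesis
    using True j0 assms(2) by simp
qed (auto simp: fps_sum_nth intro!: sum.neutral)

lemma inj_on_strict_mono_nat: "(\<And>j. f j < f (Suc j)) \<Longrightarrow> inj_on (f :: nat \<Rightarrow> nat) A"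
  by (metis strict_mono_Suc_iff strict_mono_imp_inj_on)

lemma of_nat_bit: "(of_nat k :: bit) = of_bool (odd k)"
  by (induction k) auto

lemma c3_bit_eq_coeff:
  "(of_nat (c3 m) :: bit) = ((\<Sum>j=0..Suc m. fps_X ^ (2 * (j * j + tri j)))
     + (\<Sum>j=1..Suc m. fps_X ^ (2 * ((j - 1) * j + tri j))) + (\<Sum>t=0..m. fps_X ^ tri t)) $ m"
proof -
  have "eq_upto m (dp_gf {1..m}) (dp_gf {1..Suc m})"
    by (rule eq_upto_sym, rule dp_gf_eq_upto) auto
  also have "eq_upto m \<dots> (shanks (Suc m))"
    by (rule dp_gf_eq_upto_shanks) simp
  finally have P: "eq_upto m (dp_gf {1..m}) (shanks (Suc m))" .
  have "eq_upto m (\<Sum>j=1..m. (fps_X ^ j^2 + fps_X ^ (j^2 + 1)) * dp_gf (allowed_parts j \<inter> {..m}))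
      ((dp_gf {1..m})^2 + (dp_gf {1..m})^3 :: bit fps)"
    by (rule c3_gf_eq_upto)
  also have "eq_upto m \<dots> ((shanks (Suc m))^2 + (\<Sum>t=0..m. fps_X ^ tri t))"
    by (intro eq_upto_add eq_upto_power P gauss_identity_bit_eq_upto)
  also have "(shanks (Suc m))^2 = (\<Sum>j=0..Suc m. fps_X ^ (2 * (j * j + tri j)))
      + (\<Sum>j=1..Suc m. fps_X ^ (2 * ((j - 1) * j + tri j)))"
    unfolding shanks_eq_pentagonal bit_fps_square_add bit_fps_square_sum bit_fps_square_X_power ..
  finally show ?thesis
    unfolding c3_bit_coeff eq_upto_def by simp
qed

lemma c3_parity:
  "odd (c3 m) \<longleftrightarrow> ((\<exists>j\<in>{0..Suc m}. 2 * (j * j + tri j) = m)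
     \<noteq> (\<exists>j\<in>{1..Suc m}. 2 * ((j - 1) * j + tri j) = m)) \<noteq> (\<exists>t\<in>{0..m}. tri t = m)"
  (is "_ \<longleftrightarrow> (?A \<noteq> ?B) \<noteq> ?C")
proof -
  have inj_A: "inj_on (\<lambda>j. 2 * (j * j + tri j)) A" for A
    by (rule inj_on_strict_mono_nat) simp
  have inj_B: "inj_on (\<lambda>j. 2 * ((j - 1) * j + tri j)) A" for A
  proof (rule inj_on_strict_mono_nat)
    fix j :: nat
    have "(j - 1) * j \<le> (Suc j - 1) * Suc j"
      by (cases j) auto
    then show "2 * ((j - 1) * j + tri j) < 2 * ((Suc j - 1) * Suc j + tri (Suc j))"
      by simp
  qed
  have inj_C: "inj_on tri A" for A
    by (rule inj_on_strict_mono_nat) simp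
  have "(of_bool (odd (c3 m)) :: bit) = of_bool ?A + of_bool ?B + of_bool ?C"
    unfolding of_nat_bit[symmetric] c3_bit_eq_coeff fps_add_nth
    by (simp only: coeff_sum_X_power[OF inj_A finite_atLeastAtMost]
        coeff_sum_X_power[OF inj_B finite_atLeastAtMost] coeff_sum_X_power[OF inj_C finite_atLeastAtMost])
  then show ?thesis
    by (cases ?A; cases ?B; cases ?C; cases "odd (c3 m)") simp_all
qed

lemma pentagonal_nonneg_iff:
  "(\<exists>j\<in>{0..Suc m}. 2 * (j * j + tri j) = m) \<longleftrightarrow> (\<exists>k::int. k \<ge> 0 \<and> int m = k * (3 * k + 1))"
proof -
  have pent: "2 * (j * j + tri j) = j * (3 * j + 1)" for j
    using two_tri[of j] by (simp add: algebra_simps)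
  show ?thesis
  proof
    assume "\<exists>j\<in>{0..Suc m}. 2 * (j * j + tri j) = m"
    then obtain j where "2 * (j * j + tri j) = m"
      by blast
    then have "m = j * (3 * j + 1)"
      unfolding pent by simp
    then show "\<exists>k::int. k \<ge> 0 \<and> int m = k * (3 * k + 1)"
      by (intro exI[of _ "int j"]) (simp add: algebra_simps)
  next
    assume "\<exists>k::int. k \<ge> 0 \<and> int m = k * (3 * k + 1)"
    then obtain j where "int m = int j * (3 * int j + 1)"
      using nonneg_int_cases by blast
    then have "int m = int (j * (3 * j + 1))"
      by (simp add: algebra_simps)
    then have "m = j * (3 * j + 1)"
      by (simp only: of_nat_eq_iff)
    then show "\<exists>j\<in>{0..Suc m}. 2 * (j * j + tri j) = m"
      using pent by (intro bexI[of _ j]) auto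
  qed
qed

lemma two_pentagonal_neg:
  assumes "1 \<le> j"
  shows "int (2 * ((j - 1) * j + tri j)) = (- int j) * (3 * (- int j) + 1)"
proof -
  have "int (2 * ((j - 1) * j + tri j)) = 2 * (int j - 1) * int j + 2 * int (tri j)"
    using assms by (simp add: of_nat_diff)
  then show ?thesis
    unfolding two_tri_int by (simp add: algebra_simps)
qed

lemma pentagonal_neg_iff:
  "(\<exists>j\<in>{1..Suc m}. 2 * ((j - 1) * j + tri j) = m) \<longleftrightarrow> (\<exists>k::int. k < 0 \<and> int m = k * (3 * k + 1))"
proof
  assume "\<exists>j\<in>{1..Suc m}. 2 * ((j - 1) * j + tri j) = m"
  then obtain j where "1 \<le> j" "2 * ((j - 1) * j + tri j) = m"
    by auto
  then show "\<exists>k::int. k < 0 \<and> int m = k * (3 * k + 1)"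
    using two_pentagonal_neg by (intro exI[of _ "- int j"]) auto
next
  assume "\<exists>k::int. k < 0 \<and> int m = k * (3 * k + 1)"
  then obtain k :: int where k: "k < 0" "int m = k * (3 * k + 1)"
    by blast
  define j where "j = nat (- k)"
  have j: "int j = - k" "1 \<le> j"
    using k(1) by (simp_all add: j_def)
  then have "int (2 * ((j - 1) * j + tri j)) = int m"
    using two_pentagonal_neg[OF j(2)] k(2) by simp
  then have m: "2 * ((j - 1) * j + tri j) = m"
    by (simp only: of_nat_eq_iff)
  moreover have "j \<le> m"
  proof -
    define x where "x = (j - 1) * j"
    have "2 * (x + tri j) = m"
      unfolding x_def by (rule m)
    then show ?thesis
      using le_tri[of j] by presburger
  qed
  ultimately show "\<exists>j\<in>{1..Suc m}. 2 * ((j - 1) * j + tri j) = m"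
    using j(2) by auto
qed

lemma not_pentagonal_both_signs:
  fixes k k' :: int
  assumes "k \<ge> 0" "k' < 0" "k * (3 * k + 1) = k' * (3 * k' + 1)"
  shows False
proof -
  \<comment> \<open>\<open>12 k(3k+1) + 1 = (6k+1)\<^sup>2\<close>, and \<open>6k+1\<close>, \<open>6k'+1\<close> have opposite signs\<close>
  have "(6 * k + 1)^2 = (- (6 * k' + 1))^2"
    using assms(3) by (simp add: power2_eq_square algebra_simps)
  then have "6 * k + 1 = - (6 * k' + 1)"
    using assms(1,2) by (simp add: power2_eq_iff_nonneg)
  then show False
    by presburger
qed

lemma triangular_iff:
  "(\<exists>t\<in>{0..m}. tri t = m) \<longleftrightarrow> (\<exists>t::int. t \<ge> 0 \<and> 2 * int m = t * (t + 1))"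
proof
  assume "\<exists>t\<in>{0..m}. tri t = m"
  then obtain t where "tri t = m"
    by blast
  then show "\<exists>t::int. t \<ge> 0 \<and> 2 * int m = t * (t + 1)"
    using two_tri_int[of t] by (intro exI[of _ "int t"]) simp
next
  assume "\<exists>t::int. t \<ge> 0 \<and> 2 * int m = t * (t + 1)"
  then obtain t where "2 * int m = int t * (int t + 1)"
    using nonneg_int_cases by blast
  then have "tri t = m"
    using two_tri_int[of t] by simp
  then show "\<exists>t\<in>{0..m}. tri t = m"
    using le_tri[of t] by auto
qed

lemma odd_c3_iff:
  "odd (c3 m) \<longleftrightarrow> (\<exists>k::int. int m = k * (3 * k + 1)) \<noteq> (\<exists>t::int. t \<ge> 0 \<and> 2 * int m = t * (t + 1))"
  unfolding c3_parity pentagonal_nonneg_iff pentagonal_neg_iff triangular_iff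
  using not_pentagonal_both_signs by (metis linorder_not_le)

lemma mod_5_poly: "(k * (a * k + 1)) mod 5 = ((k mod 5) * (a * (k mod 5) + 1)) mod 5" for k a :: int
  by (intro mod_mult_cong mod_add_cong) simp_all

lemma pentagonal_mod_5:
  "(k * (3 * k + 1)) mod 5 = (if k mod 5 = 1 \<or> k mod 5 = 2 then 4 else if k mod 5 = 4 then 2 else 0)"
  for k :: int
proof -
  have "k mod 5 \<in> {0, 1, 2, 3, 4}"
    by auto
  then show ?thesis
    using mod_5_poly[of k 3] by auto
qed

lemma triangular_mod_5:
  "(t * (t + 1)) mod 5 = (if t mod 5 = 1 \<or> t mod 5 = 3 then 2 else if t mod 5 = 2 then 1 else 0)"
  for t :: int
proof -
  have "t mod 5 \<in> {0, 1, 2, 3, 4}"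
    by auto
  then show ?thesis
    using mod_5_poly[of t 1] by auto
qed

lemma not_pentagonal_mod_5: "x mod 5 = 1 \<or> x mod 5 = 3 \<Longrightarrow> x \<noteq> k * (3 * k + 1)" for x k :: int
  using pentagonal_mod_5[of k] by (auto split: if_splits)

lemma not_triangular_mod_5: "x mod 5 = 3 \<or> x mod 5 = 4 \<Longrightarrow> x \<noteq> t * (t + 1)" for x t :: int
  using triangular_mod_5[of t] by (auto split: if_splits)

lemma c3_5n_plus_1:
  "odd (c3 (5 * n + 1)) \<longleftrightarrow>
     (\<exists>j::int. j \<ge> 1 \<and> (j mod 5 = 1 \<or> j mod 5 = 3) \<and> 10 * int n + 2 = j * (j + 1))"
proof -
  have "(5 * int n + 1) mod 5 = 1" "(10 * int n + 2) mod 5 = 2"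
    by presburger+
  have "odd (c3 (5 * n + 1)) \<longleftrightarrow> (\<exists>t::int. t \<ge> 0 \<and> 10 * int n + 2 = t * (t + 1))"
    using odd_c3_iff[of "5 * n + 1"] not_pentagonal_mod_5[OF disjI1, OF \<open>(5 * int n + 1) mod 5 = 1\<close>]
    by (simp only: of_nat_add of_nat_mult of_nat_numeral of_nat_1 mult_2 semiring_norm) auto
  also have "\<dots> \<longleftrightarrow> (\<exists>j::int. j \<ge> 1 \<and> (j mod 5 = 1 \<or> j mod 5 = 3) \<and> 10 * int n + 2 = j * (j + 1))"
  proof (intro iffI; elim exE conjE)
    fix t :: int assume t: "t \<ge> 0" "10 * int n + 2 = t * (t + 1)"
    then have "t mod 5 = 1 \<or> t mod 5 = 3"
      using \<open>(10 * int n + 2) mod 5 = 2\<close> triangular_mod_5[of t] by (simp split: if_splits)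
    moreover from this have "t \<ge> 1"
      using t(1) by presburger
    ultimately show "\<exists>j::int. j \<ge> 1 \<and> (j mod 5 = 1 \<or> j mod 5 = 3) \<and> 10 * int n + 2 = j * (j + 1)"
      using t(2) by blast
  next
    fix j :: int assume "j \<ge> 1" "j mod 5 = 1 \<or> j mod 5 = 3" "10 * int n + 2 = j * (j + 1)"
    then show "\<exists>t::int. t \<ge> 0 \<and> 10 * int n + 2 = t * (t + 1)"
      by (intro exI[of _ j]) simp
  qed
  finally show ?thesis .
qed

lemma c3_5n_plus_2:
  "odd (c3 (5 * n + 2)) \<longleftrightarrow> (\<exists>j::int. 5 * int n + 2 = (5 * j + 4) * (15 * j + 13))"
proof -
  have "(10 * int n + 4) mod 5 = 4" "(5 * int n + 2) mod 5 = 2"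
    by presburger+
  have "odd (c3 (5 * n + 2)) \<longleftrightarrow> (\<exists>k::int. 5 * int n + 2 = k * (3 * k + 1))"
    using odd_c3_iff[of "5 * n + 2"] not_triangular_mod_5[OF disjI2, OF \<open>(10 * int n + 4) mod 5 = 4\<close>]
    by (simp only: of_nat_add of_nat_mult of_nat_numeral of_nat_1 mult_2 semiring_norm) auto
  also have "\<dots> \<longleftrightarrow> (\<exists>j::int. 5 * int n + 2 = (5 * j + 4) * (15 * j + 13))"
  proof (intro iffI; elim exE)
    fix k :: int assume k: "5 * int n + 2 = k * (3 * k + 1)"
    then have "k mod 5 = 4"
      using \<open>(5 * int n + 2) mod 5 = 2\<close> pentagonal_mod_5[of k] by (simp split: if_splits)
    then obtain j where "k = 5 * j + 4"
      by (metis mult.commute div_mult_mod_eq)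
    then show "\<exists>j::int. 5 * int n + 2 = (5 * j + 4) * (15 * j + 13)"
      using k by (intro exI[of _ j]) (simp add: algebra_simps)
  next
    fix j :: int assume "5 * int n + 2 = (5 * j + 4) * (15 * j + 13)"
    then show "\<exists>k::int. 5 * int n + 2 = k * (3 * k + 1)"
      by (intro exI[of _ "5 * j + 4"]) (simp add: algebra_simps)
  qed
  finally show ?thesis .
qed

lemma c3_5n_plus_3:
  "odd (c3 (5 * n + 3)) \<longleftrightarrow> (\<exists>j::int. j \<ge> 0 \<and> 10 * int n + 6 = (5 * j + 2) * (5 * j + 3))"
proof -
  have "(5 * int n + 3) mod 5 = 3" "(10 * int n + 6) mod 5 = 1"
    by presburger+
  have "odd (c3 (5 * n + 3)) \<longleftrightarrow> (\<exists>t::int. t \<ge> 0 \<and> 10 * int n + 6 = t * (t + 1))"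
    using odd_c3_iff[of "5 * n + 3"] not_pentagonal_mod_5[OF disjI2, OF \<open>(5 * int n + 3) mod 5 = 3\<close>]
    by (simp only: of_nat_add of_nat_mult of_nat_numeral of_nat_1 mult_2 semiring_norm) auto
  also have "\<dots> \<longleftrightarrow> (\<exists>j::int. j \<ge> 0 \<and> 10 * int n + 6 = (5 * j + 2) * (5 * j + 3))"
  proof (intro iffI; elim exE conjE)
    fix t :: int assume t: "t \<ge> 0" "10 * int n + 6 = t * (t + 1)"
    then have "t mod 5 = 2"
      using \<open>(10 * int n + 6) mod 5 = 1\<close> triangular_mod_5[of t] by (simp split: if_splits)
    then obtain j where "t = 5 * j + 2" "j \<ge> 0"
      using t(1) by (metis mult.commute div_mult_mod_eq pos_imp_zdiv_nonneg_iff zero_less_numeral)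
    then show "\<exists>j::int. j \<ge> 0 \<and> 10 * int n + 6 = (5 * j + 2) * (5 * j + 3)"
      using t(2) by (intro exI[of _ j]) (simp add: algebra_simps)
  next
    fix j :: int assume "j \<ge> 0" "10 * int n + 6 = (5 * j + 2) * (5 * j + 3)"
    then show "\<exists>t::int. t \<ge> 0 \<and> 10 * int n + 6 = t * (t + 1)"
      by (intro exI[of _ "5 * j + 2"]) (simp add: algebra_simps)
  qed
  finally show ?thesis .
qed

lemma c3_5n_plus_4:
  "odd (c3 (5 * n + 4)) \<longleftrightarrow> (\<exists>j::int. (j mod 5 = 1 \<or> j mod 5 = 2) \<and> 5 * int n + 4 = j * (3 * j + 1))"
proof -
  have "(10 * int n + 8) mod 5 = 3" "(5 * int n + 4) mod 5 = 4"
    by presburger+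
  have "odd (c3 (5 * n + 4)) \<longleftrightarrow> (\<exists>k::int. 5 * int n + 4 = k * (3 * k + 1))"
    using odd_c3_iff[of "5 * n + 4"] not_triangular_mod_5[OF disjI1, OF \<open>(10 * int n + 8) mod 5 = 3\<close>]
    by (simp only: of_nat_add of_nat_mult of_nat_numeral of_nat_1 mult_2 semiring_norm) auto
  also have "\<dots> \<longleftrightarrow> (\<exists>j::int. (j mod 5 = 1 \<or> j mod 5 = 2) \<and> 5 * int n + 4 = j * (3 * j + 1))"
  proof (intro iffI; elim exE)
    fix k :: int assume k: "5 * int n + 4 = k * (3 * k + 1)"
    then have "k mod 5 = 1 \<or> k mod 5 = 2"
      using \<open>(5 * int n + 4) mod 5 = 4\<close> pentagonal_mod_5[of k] by (simp split: if_splits)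
    then show "\<exists>j::int. (j mod 5 = 1 \<or> j mod 5 = 2) \<and> 5 * int n + 4 = j * (3 * j + 1)"
      using k by blast
  qed blast
  finally show ?thesis .
qed

theorem theorem3:
  fixes n :: nat
  shows "(odd (c3 (5*n+1)) \<longleftrightarrow>
            (\<exists>j::int. j \<ge> 1 \<and> (j mod 5 = 1 \<or> j mod 5 = 3) \<and> 10 * int n + 2 = j * (j + 1)))
       \<and> (odd (c3 (5*n+2)) \<longleftrightarrow>
            (\<exists>j::int. 5 * int n + 2 = (5*j+4) * (15*j+13)))
       \<and> (odd (c3 (5*n+3)) \<longleftrightarrow>
            (\<exists>j::int. j \<ge> 0 \<and> 10 * int n + 6 = (5*j+2) * (5*j+3)))
       \<and> (odd (c3 (5*n+4)) \<longleftrightarrow>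
            (\<exists>j::int. (j mod 5 = 1 \<or> j mod 5 = 2) \<and> 5 * int n + 4 = j * (3*j+1)))"
  using c3_5n_plus_1 c3_5n_plus_2 c3_5n_plus_3 c3_5n_plus_4 by blast

end
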